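(* Let $\Omega\subset\mathbb R^3$ be a bounded domain containing the origin and $k\ge0$ an integer. Then $$\mathbb P_{k+1}(\Omega; \mathbb T) = (\mathbb P_k(\Omega; \mathbb S)\times\boldsymbol x)\oplus\operatorname{dev}\operatorname{grad}\mathbb P_{k+2}(\Omega; \mathbb R^3),$$ where $\mathbb P_k(\Omega;\mathbb S)\times\boldsymbol x=\{\boldsymbol\tau\times\boldsymbol x:\boldsymbol\tau\in\mathbb P_k(\Omega;\mathbb S)\}$.
   Context: $\mathbb S,\mathbb T$: real symmetric, resp. trace-free, $3\times3$ matrices; $\mathbb P_m(\Omega;X)$: $X$-valued polynomials of total degree $\le m$. $\boldsymbol x$ is the position vector; $\boldsymbol\tau\times\boldsymbol x$ is the matrix whose $i$-th row is (row $i$ of $\boldsymbol\tau$)$\times\boldsymbol x$. $\operatorname{grad}\boldsymbol u=(\partial_ju_i)_{ij}$ and $\operatorname{dev}\boldsymbol A=\boldsymbol A-\frac13\operatorname{tr}(\boldsymbol A)\boldsymbol I$. *)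

theory Defs
  imports "HOL-Analysis.Analysis"
begin

definition poly3 :: "nat \<Rightarrow> (real^3 \<Rightarrow> real) \<Rightarrow> bool" where
  "poly3 m p \<longleftrightarrow> (\<exists>c :: nat \<Rightarrow> nat \<Rightarrow> nat \<Rightarrow> real. \<forall>x.
     p x = (\<Sum>a\<le>m. \<Sum>b\<le>m. \<Sum>d\<le>m.
              if a + b + d \<le> m then c a b d * (x$1)^a * (x$2)^b * (x$3)^d else 0))"

definition vpoly3 :: "nat \<Rightarrow> (real^3 \<Rightarrow> real^3) \<Rightarrow> bool" where
  "vpoly3 m p \<longleftrightarrow> (\<forall>i. poly3 m (\<lambda>x. p x $ i))"

definition mpoly3 :: "nat \<Rightarrow> (real^3 \<Rightarrow> real^3^3) \<Rightarrow> bool" where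
  "mpoly3 m p \<longleftrightarrow> (\<forall>i j. poly3 m (\<lambda>x. p x $ i $ j))"

text \<open>A function on \<Omega> is represented by a function on R^3 that vanishes outside \<Omega>.\<close>
definition on_dom :: "(real^3) set \<Rightarrow> (real^3 \<Rightarrow> 'b::zero) \<Rightarrow> real^3 \<Rightarrow> 'b" where
  "on_dom \<Omega> p = (\<lambda>x. if x \<in> \<Omega> then p x else 0)"

definition PM :: "(real^3) set \<Rightarrow> nat \<Rightarrow> (real^3^3) set \<Rightarrow> (real^3 \<Rightarrow> real^3^3) set" where
  "PM \<Omega> m X = {on_dom \<Omega> p | p. mpoly3 m p \<and> (\<forall>x\<in>\<Omega>. p x \<in> X)}"

definition PV :: "(real^3) set \<Rightarrow> nat \<Rightarrow> (real^3 \<Rightarrow> real^3) set" where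
  "PV \<Omega> m = {on_dom \<Omega> p | p. vpoly3 m p}"

definition symm_mats :: "(real^3^3) set" where
  "symm_mats = {A. transpose A = A}"

definition tracefree_mats :: "(real^3^3) set" where
  "tracefree_mats = {A. trace A = 0}"

definition dev :: "real^3^3 \<Rightarrow> real^3^3" where
  "dev A = A - (trace A / 3) *\<^sub>R mat 1"

text \<open>grad u = (\<partial>_j u_i)_{ij}: the Jacobian matrix.\<close>
definition grad :: "(real^3 \<Rightarrow> real^3) \<Rightarrow> real^3 \<Rightarrow> real^3^3" where
  "grad u x = jacobian u (at x)"

definition cross_x :: "(real^3 \<Rightarrow> real^3^3) \<Rightarrow> real^3 \<Rightarrow> real^3^3" where
  "cross_x \<tau> = (\<lambda>x. \<chi> i. cross3 (\<tau> x $ i) x)"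

definition dev_grad_on :: "(real^3) set \<Rightarrow> (real^3 \<Rightarrow> real^3) \<Rightarrow> real^3 \<Rightarrow> real^3^3" where
  "dev_grad_on \<Omega> u = on_dom \<Omega> (\<lambda>x. dev (grad u x))"

definition is_direct_sum :: "('a \<Rightarrow> 'b::ab_group_add) set \<Rightarrow> ('a \<Rightarrow> 'b) set \<Rightarrow> ('a \<Rightarrow> 'b) set \<Rightarrow> bool" where
  "is_direct_sum V A B \<longleftrightarrow>
     V = {(\<lambda>x. a x + b x) | a b. a \<in> A \<and> b \<in> B} \<and> A \<inter> B = {(\<lambda>x. 0)}"

end

theory Submission
  imports Defs "HOL-Computational_Algebra.Polynomial"
begin

text \<open>
  Both sides split into homogeneous components, and \<open>\<tau> \<mapsto> \<tau> \<times> x\<close> and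
  \<open>u \<mapsto> dev grad u\<close> raise and lower the degree by one, respectively, so it suffices to
  decompose a homogeneous trace-free \<open>\<sigma>\<close> of degree \<open>m\<close>. By Euler's identity
  \<open>(grad u) x = (m + 1) u\<close>, the field \<open>u = (\<sigma> x + s x) / (m + 1)\<close> with
  \<open>s = div (\<sigma> x) / (2 m)\<close> satisfies \<open>(dev grad u) x = \<sigma> x\<close>. The remainder
  \<open>\<rho> = \<sigma> - dev grad u\<close> annihilates \<open>x\<close>, so the Koszul identity \<open>(curl v) \<times> x = (n + 1) v\<close>,
  for \<open>v\<close> homogeneous of degree \<open>n\<close> and orthogonal to \<open>x\<close>, writes every row of \<open>\<rho>\<close> as
  \<open>W\<^sub>i \<times> x\<close>. As \<open>\<rho>\<close> is trace-free, the axial vector \<open>k\<close> of \<open>W\<close> is orthogonal to \<open>x\<close>,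
  so \<open>k = a \<times> x\<close> by Koszul again, and \<open>\<tau> = W + a x\<^sup>T\<close> is symmetric with \<open>\<tau> \<times> x = \<rho>\<close>.

  Conversely, \<open>\<tau> \<times> x = dev grad u\<close> gives \<open>(dev grad u) x = 0\<close> near the origin, hence for
  every homogeneous component \<open>q\<close> of \<open>u\<close>. Euler's identity then gives \<open>q = s x\<close>, and the two
  resulting expressions for \<open>div q\<close> leave only \<open>s\<close> constant or \<open>s = 0\<close>; either way
  \<open>dev grad q = 0\<close>.
\<close>

section \<open>Partial derivatives\<close>

definition partial :: "'n \<Rightarrow> (real^'n \<Rightarrow> real) \<Rightarrow> real^'n \<Rightarrow> real" where
  "partial j f x = frechet_derivative f (at x) (axis j 1)"

lemma has_derivative_imp_partial:
  assumes "(f has_derivative F) (at x)"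
  shows "partial j f x = F (axis j 1)"
  using frechet_derivative_at[OF assms] by (simp add: partial_def)

lemma has_derivative_frechet_derivative:
  "f differentiable (at x) \<Longrightarrow> (f has_derivative frechet_derivative f (at x)) (at x)"
  using frechet_derivative_works by blast

lemma partial_const [simp]: "partial j (\<lambda>x. c) x = 0"
  by (simp add: partial_def)

lemma has_derivative_vec_nth: "((\<lambda>x::real^'n. x $ i) has_derivative (\<lambda>h. h $ i)) (at x)"
  using bounded_linear.has_derivative[OF bounded_linear_vec_nth has_derivative_ident] .

lemma differentiable_vec_nth [simp]: "(\<lambda>x::real^'n. x $ i) differentiable (at x)"
  using has_derivative_vec_nth by (rule differentiableI)

lemma partial_vec_nth: "partial j (\<lambda>x. x $ i) x = (if i = j then 1 else 0)"
  by (simp add: has_derivative_imp_partial[OF has_derivative_vec_nth] axis_def)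

lemma partial_add:
  assumes "f differentiable (at x)" "g differentiable (at x)"
  shows "partial j (\<lambda>x. f x + g x) x = partial j f x + partial j g x"
  using has_derivative_imp_partial
      [OF has_derivative_add[OF assms[THEN has_derivative_frechet_derivative]]]
  by (simp add: partial_def)

lemma partial_mult:
  assumes "f differentiable (at x)" "g differentiable (at x)"
  shows "partial j (\<lambda>x. f x * g x) x = f x * partial j g x + partial j f x * g x"
  using has_derivative_imp_partial
      [OF has_derivative_mult[OF assms[THEN has_derivative_frechet_derivative]]]
  by (simp add: partial_def)

lemma partial_cmult:
  assumes "f differentiable (at x)"
  shows "partial j (\<lambda>x. c * f x) x = c * partial j f x"
  using has_derivative_imp_partial
      [OF has_derivative_mult_right[OF has_derivative_frechet_derivative[OF assms]]]
  by (simp add: partial_def)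

lemma partial_sum:
  assumes "finite A" "\<And>a. a \<in> A \<Longrightarrow> f a differentiable (at x)"
  shows "partial j (\<lambda>x. \<Sum>a\<in>A. f a x) x = (\<Sum>a\<in>A. partial j (f a) x)"
  using has_derivative_imp_partial
      [OF has_derivative_sum[OF has_derivative_frechet_derivative[OF assms(2)]]]
  by (simp add: partial_def)

section \<open>Homogeneous polynomials\<close>

inductive hom_poly :: "nat \<Rightarrow> (real^'n \<Rightarrow> real) \<Rightarrow> bool" where
  zero: "hom_poly m (\<lambda>x. 0)"
| const: "hom_poly 0 (\<lambda>x. c)"
| mult_coord: "hom_poly m f \<Longrightarrow> hom_poly (Suc m) (\<lambda>x. x $ i * f x)"
| add: "hom_poly m f \<Longrightarrow> hom_poly m g \<Longrightarrow> hom_poly m (\<lambda>x. f x + g x)"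
| cmult: "hom_poly m f \<Longrightarrow> hom_poly m (\<lambda>x. c * f x)"

lemma hom_poly_sum:
  "finite A \<Longrightarrow> (\<And>a. a \<in> A \<Longrightarrow> hom_poly m (f a)) \<Longrightarrow> hom_poly m (\<lambda>x. \<Sum>a\<in>A. f a x)"
  by (induction A rule: finite_induct) (auto intro: hom_poly.intros)

lemma hom_poly_divide: "hom_poly m f \<Longrightarrow> hom_poly m (\<lambda>x. f x / c)"
  using hom_poly.cmult[of m f "inverse c"] by (simp add: field_simps)

lemma hom_poly_diff: "hom_poly m f \<Longrightarrow> hom_poly m g \<Longrightarrow> hom_poly m (\<lambda>x. f x - g x)"
  using hom_poly.add[of m f "\<lambda>x. -1 * g x"] hom_poly.cmult[of m g "-1"] by simp

lemma hom_poly_mult_coord_right: "hom_poly m f \<Longrightarrow> hom_poly (Suc m) (\<lambda>x. f x * x $ i)"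
  using hom_poly.mult_coord[of m f i] by (simp add: mult.commute)

lemma hom_poly_if: "(P \<Longrightarrow> hom_poly m f) \<Longrightarrow> hom_poly m (\<lambda>x. if P then f x else 0)"
  by (cases P) (auto intro: hom_poly.zero)

lemma hom_poly_scaleR: "hom_poly m f \<Longrightarrow> f (t *\<^sub>R x) = t ^ m * f x"
  by (induction rule: hom_poly.induct) (auto simp: algebra_simps)

lemma hom_poly_differentiable: "hom_poly m f \<Longrightarrow> f differentiable (at x)"
  by (induction rule: hom_poly.induct) auto

lemma partial_mult_coord:
  assumes "f differentiable (at x)"
  shows "partial j (\<lambda>x. x $ i * f x) x = x $ i * partial j f x + (if i = j then f x else 0)"
  by (simp add: partial_mult[OF differentiable_vec_nth assms] partial_vec_nth)

lemma partial_hom_poly_0: "hom_poly 0 f \<Longrightarrow> partial j f x = 0"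
proof (induction "0::nat" f rule: hom_poly.induct)
  case (add f g)
  then show ?case by (simp add: partial_add hom_poly_differentiable)
next
  case (cmult f c)
  then show ?case by (simp add: partial_cmult hom_poly_differentiable)
qed simp_all

lemma hom_poly_partial: "hom_poly m f \<Longrightarrow> hom_poly (m - 1) (partial j f)"
proof (induction rule: hom_poly.induct)
  case (mult_coord m f i)
  have "hom_poly m (\<lambda>x. x $ i * partial j f x)"
  proof (cases m)
    case 0
    then show ?thesis using mult_coord.hyps by (simp add: partial_hom_poly_0 hom_poly.zero)
  next
    case (Suc n)
    then show ?thesis using mult_coord.IH hom_poly.mult_coord by fastforce
  qed
  then have "hom_poly m (\<lambda>x. x $ i * partial j f x + (if i = j then f x else 0))"
    using mult_coord.hyps by (intro hom_poly.add hom_poly_if) auto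
  then show ?case
    using mult_coord.hyps by (simp add: partial_mult_coord hom_poly_differentiable)
next
  case (add m f g)
  then show ?case by (simp add: partial_add hom_poly_differentiable hom_poly.add)
next
  case (cmult m f c)
  then show ?case by (simp add: partial_cmult hom_poly_differentiable hom_poly.cmult)
qed (auto intro: hom_poly.intros)

lemma hom_poly_partial_mult_coord:
  assumes "hom_poly m f"
  shows "hom_poly m (\<lambda>x. partial j f x * x $ i)"
proof (cases m)
  case 0
  then show ?thesis using assms by (simp add: partial_hom_poly_0 hom_poly.zero)
next
  case (Suc n)
  then show ?thesis using hom_poly_partial[OF assms, of j] hom_poly_mult_coord_right by fastforce
qed

lemma hom_poly_euler: "hom_poly m f \<Longrightarrow> (\<Sum>j\<in>UNIV. x $ j * partial j f x) = real m * f x"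
proof (induction rule: hom_poly.induct)
  case (mult_coord m f i)
  have "x $ j * partial j (\<lambda>x. x $ i * f x) x
      = x $ i * (x $ j * partial j f x) + (if i = j then x $ i * f x else 0)" for j
    unfolding partial_mult_coord[OF hom_poly_differentiable[OF mult_coord.hyps]]
    by (simp add: algebra_simps)
  then have "(\<Sum>j\<in>UNIV. x $ j * partial j (\<lambda>x. x $ i * f x) x)
      = x $ i * (\<Sum>j\<in>UNIV. x $ j * partial j f x) + x $ i * f x"
    by (simp add: sum.distrib sum_distrib_left)
  then show ?case using mult_coord.IH by (simp add: algebra_simps)
next
  case (add m f g)
  then show ?case
    by (simp add: partial_add hom_poly_differentiable distrib_left sum.distrib algebra_simps)
next
  case (cmult m f c)
  then show ?case
    by (simp add: partial_cmult hom_poly_differentiable sum_distrib_left[symmetric] algebra_simps)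
qed simp_all

lemma hom_poly_components_eq_0:
  fixes w :: "nat \<Rightarrow> real^'n \<Rightarrow> real"
  assumes hom: "\<And>m. m \<le> N \<Longrightarrow> hom_poly m (w m)" and "r > 0"
    and vanish: "\<And>x. norm x < r \<Longrightarrow> (\<Sum>m\<le>N. w m x) = 0"
    and "m \<le> N"
  shows "w m x = 0"
proof -
  \<comment> \<open>Along the ray through \<open>x\<close> the sum is the polynomial \<open>p\<close> in \<open>t\<close>, which vanishes for small \<open>t\<close>.\<close>
  define p where "p = (\<Sum>j\<le>N. monom (w j x) j)"
  have "norm x + 1 > 0" by (simp add: add_nonneg_pos)
  define \<delta> where "\<delta> = r / (norm x + 1)"
  have "\<delta> > 0" unfolding \<delta>_def using \<open>r > 0\<close> \<open>norm x + 1 > 0\<close> by simp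
  have "poly p t = 0" if t: "0 < t" "t < \<delta>" for t
  proof -
    have "norm (t *\<^sub>R x) \<le> t * (norm x + 1)" using t by simp
    also have "\<dots> < \<delta> * (norm x + 1)"
      using t \<open>norm x + 1 > 0\<close> by (simp add: mult_strict_right_mono)
    also have "\<dots> = r" unfolding \<delta>_def using \<open>norm x + 1 > 0\<close> by simp
    finally have "(\<Sum>j\<le>N. w j (t *\<^sub>R x)) = 0" by (rule vanish)
    then show ?thesis
      by (simp add: p_def poly_sum poly_monom hom_poly_scaleR[OF hom] mult.commute)
  qed
  then have "{0<..<\<delta>} \<subseteq> {t. poly p t = 0}" by auto
  then have "p = 0"
    using poly_roots_finite[of p] infinite_Ioo[of 0 \<delta>] \<open>\<delta> > 0\<close> finite_subset by blast
  moreover have "coeff p m = w m x"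
    unfolding p_def coeff_sum using \<open>m \<le> N\<close> by simp
  ultimately show ?thesis by simp
qed

definition monomial :: "('n \<Rightarrow> nat) \<Rightarrow> real^'n \<Rightarrow> real" where
  "monomial \<alpha> x = (\<Prod>i\<in>UNIV. x $ i ^ \<alpha> i)"

lemma hom_poly_power_mult: "hom_poly m f \<Longrightarrow> hom_poly (a + m) (\<lambda>x. x $ i ^ a * f x)"
  by (induction a) (auto simp: mult.assoc dest: hom_poly.mult_coord[of _ _ i])

lemma hom_poly_monomial: "hom_poly (sum \<alpha> UNIV) (monomial \<alpha>)"
proof -
  have "hom_poly (sum \<alpha> A) (\<lambda>x. \<Prod>i\<in>A. x $ i ^ \<alpha> i)" if "finite A" for A
    using that by (induction A rule: finite_induct) (auto intro: hom_poly.const hom_poly_power_mult)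
  then show ?thesis unfolding monomial_def[abs_def] by simp
qed

lemma finite_multi_indices: "finite {\<alpha>::'n::finite \<Rightarrow> nat. sum \<alpha> UNIV = m}"
proof (rule finite_subset)
  show "{\<alpha>::'n \<Rightarrow> nat. sum \<alpha> UNIV = m} \<subseteq> Pi\<^sub>E UNIV (\<lambda>_. {..m})"
    by (auto simp: PiE_UNIV_domain intro: member_le_sum)
qed (simp add: finite_PiE)

lemma sum_fun_upd_UNIV:
  fixes \<alpha> :: "'n::finite \<Rightarrow> nat"
  shows "sum (\<alpha>(i := k)) UNIV + \<alpha> i = sum \<alpha> UNIV + k"
  by (simp add: sum.remove[of UNIV i] sum.cong[of "UNIV - {i}" _ "\<alpha>(i := _)" \<alpha>])

lemma monomial_update_Suc: "monomial (\<alpha>(i := Suc (\<alpha> i))) x = x $ i * monomial \<alpha> x"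
  by (simp add: monomial_def prod.remove[of UNIV i]
      prod.cong[of "UNIV - {i}" _ "\<lambda>j. x $ j ^ (\<alpha>(i := _)) j"])

lemma hom_poly_monomial_expansion:
  fixes f :: "real^'n \<Rightarrow> real"
  shows "hom_poly m f \<Longrightarrow> \<exists>c. \<forall>x. f x = (\<Sum>\<alpha> | sum \<alpha> UNIV = m. c \<alpha> * monomial \<alpha> x)"
proof (induction rule: hom_poly.induct)
  case (zero m)
  show ?case by (rule exI[of _ "\<lambda>_. 0"]) simp
next
  case (const k)
  have "{\<alpha>::'n \<Rightarrow> nat. sum \<alpha> UNIV = 0} = {\<lambda>_. 0}" by (auto simp: fun_eq_iff sum_eq_0_iff)
  then show ?case by (intro exI[of _ "\<lambda>_. k"]) (simp add: monomial_def)
next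
  case (mult_coord m f i)
  then obtain c where c: "\<And>x. f x = (\<Sum>\<alpha> | sum \<alpha> UNIV = m. c \<alpha> * monomial \<alpha> x)" by blast
  define c' where "c' \<beta> = (if \<beta> i = 0 then 0 else c (\<beta>(i := \<beta> i - 1)))" for \<beta>
  have sum_inc: "sum (\<alpha>(i := Suc (\<alpha> i))) UNIV = Suc (sum \<alpha> UNIV)" for \<alpha> :: "'n \<Rightarrow> nat"
    using sum_fun_upd_UNIV[of \<alpha> i "Suc (\<alpha> i)"] by simp
  have sum_dec: "sum (\<beta>(i := \<beta> i - 1)) UNIV = m"
    if "sum \<beta> UNIV = Suc m" "0 < \<beta> i" for \<beta> :: "'n \<Rightarrow> nat"
    using sum_fun_upd_UNIV[of \<beta> i "\<beta> i - 1"] that by simp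
  have "x $ i * f x = (\<Sum>\<beta> | sum \<beta> UNIV = Suc m. c' \<beta> * monomial \<beta> x)" for x
  proof -
    have "x $ i * f x = (\<Sum>\<alpha> | sum \<alpha> UNIV = m. c \<alpha> * monomial (\<alpha>(i := Suc (\<alpha> i))) x)"
      by (simp add: c monomial_update_Suc sum_distrib_left mult.left_commute)
    also have "\<dots> = (\<Sum>\<beta> | sum \<beta> UNIV = Suc m. c' \<beta> * monomial \<beta> x)"
    proof (rule sum.reindex_bij_witness_not_neutral[where S' = "{}"
          and T' = "{\<beta>. sum \<beta> UNIV = Suc m \<and> \<beta> i = 0}"
          and i = "\<lambda>\<beta>. \<beta>(i := \<beta> i - 1)" and j = "\<lambda>\<alpha>. \<alpha>(i := Suc (\<alpha> i))"])
      show "finite {\<beta>::'n \<Rightarrow> nat. sum \<beta> UNIV = Suc m \<and> \<beta> i = 0}"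
        using finite_multi_indices[of "Suc m"] by (rule finite_subset[rotated]) auto
    qed (auto simp: c'_def sum_inc sum_dec[unfolded One_nat_def] fun_upd_same fun_upd_upd
        simp del: fun_upd_apply)
    finally show ?thesis .
  qed
  then show ?case by blast
next
  case (add m f g)
  then obtain c d where "\<And>x. f x = (\<Sum>\<alpha> | sum \<alpha> UNIV = m. c \<alpha> * monomial \<alpha> x)"
    "\<And>x. g x = (\<Sum>\<alpha> | sum \<alpha> UNIV = m. d \<alpha> * monomial \<alpha> x)" by blast
  then show ?case
    by (intro exI[of _ "\<lambda>\<alpha>. c \<alpha> + d \<alpha>"]) (simp add: distrib_right sum.distrib)
next
  case (cmult m f k)
  then obtain c where "\<And>x. f x = (\<Sum>\<alpha> | sum \<alpha> UNIV = m. c \<alpha> * monomial \<alpha> x)" by blast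
  then show ?case
    by (intro exI[of _ "\<lambda>\<alpha>. k * c \<alpha>"]) (simp add: sum_distrib_left mult.assoc)
qed

lemma sum_triples_eq_multi_indices:
  fixes h :: "nat \<Rightarrow> nat \<Rightarrow> nat \<Rightarrow> 'a::comm_monoid_add"
  assumes "m \<le> n"
  shows "(\<Sum>a\<le>n. \<Sum>b\<le>n. \<Sum>d\<le>n. if a + b + d = m then h a b d else 0)
       = (\<Sum>\<alpha> | sum \<alpha> (UNIV::3 set) = m. h (\<alpha> 1) (\<alpha> 2) (\<alpha> 3))"
proof -
  define B where "B = Sigma {..n} (\<lambda>_. Sigma {..n} (\<lambda>_. {..n::nat}))"
  have "(\<Sum>a\<le>n. \<Sum>b\<le>n. \<Sum>d\<le>n. if a + b + d = m then h a b d else 0)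
      = (\<Sum>(a, b, d)\<in>B. if a + b + d = m then h a b d else 0)"
    unfolding B_def by (simp add: sum.cartesian_product)
  also have "\<dots> = (\<Sum>(a, b, d)\<in>{(a, b, d)\<in>B. a + b + d = m}. h a b d)"
    by (rule sum.mono_neutral_cong_right) (auto simp: B_def split: if_splits)
  also have "\<dots> = (\<Sum>\<alpha> | sum \<alpha> (UNIV::3 set) = m. h (\<alpha> 1) (\<alpha> 2) (\<alpha> 3))"
  proof (rule sum.reindex_bij_witness[where i = "\<lambda>\<alpha>. (\<alpha> 1, \<alpha> 2, \<alpha> 3)"
        and j = "\<lambda>(a, b, d) (k::3). if k = 1 then a else if k = 2 then b else d"])
    fix \<alpha> :: "3 \<Rightarrow> nat"
    assume "\<alpha> \<in> {\<alpha>. sum \<alpha> UNIV = m}"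
    then have "\<alpha> k \<le> n" for k
      using member_le_sum[of k UNIV \<alpha>] \<open>m \<le> n\<close> by simp
    with \<open>\<alpha> \<in> _\<close> show "(\<alpha> 1, \<alpha> 2, \<alpha> 3) \<in> {(a, b, d)\<in>B. a + b + d = m}"
      by (simp add: B_def sum_3)
    show "(case (\<alpha> 1, \<alpha> 2, \<alpha> 3) of
        (a, b, d) \<Rightarrow> \<lambda>k::3. if k = 1 then a else if k = 2 then b else d) = \<alpha>"
      using exhaust_3 by (auto simp: fun_eq_iff)
  qed (auto simp: sum_3)
  finally show ?thesis .
qed

lemma sum_triples_le_eq_multi_indices:
  fixes h :: "nat \<Rightarrow> nat \<Rightarrow> nat \<Rightarrow> 'a::comm_monoid_add"
  shows "(\<Sum>a\<le>n. \<Sum>b\<le>n. \<Sum>d\<le>n. if a + b + d \<le> n then h a b d else 0)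
       = (\<Sum>m\<le>n. \<Sum>\<alpha> | sum \<alpha> (UNIV::3 set) = m. h (\<alpha> 1) (\<alpha> 2) (\<alpha> 3))"
proof -
  have "(\<Sum>a\<le>n. \<Sum>b\<le>n. \<Sum>d\<le>n. if a + b + d \<le> n then h a b d else 0)
      = (\<Sum>a\<le>n. \<Sum>b\<le>n. \<Sum>d\<le>n. \<Sum>m\<le>n. if a + b + d = m then h a b d else 0)"
    by simp
  also have "\<dots> = (\<Sum>a\<le>n. \<Sum>b\<le>n. \<Sum>m\<le>n. \<Sum>d\<le>n. if a + b + d = m then h a b d else 0)"
    by (rule sum.cong[OF refl], rule sum.cong[OF refl], rule sum.swap)
  also have "\<dots> = (\<Sum>a\<le>n. \<Sum>m\<le>n. \<Sum>b\<le>n. \<Sum>d\<le>n. if a + b + d = m then h a b d else 0)"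
    by (rule sum.cong[OF refl], rule sum.swap)
  also have "\<dots> = (\<Sum>m\<le>n. \<Sum>a\<le>n. \<Sum>b\<le>n. \<Sum>d\<le>n. if a + b + d = m then h a b d else 0)"
    by (rule sum.swap)
  also have "\<dots> = (\<Sum>m\<le>n. \<Sum>\<alpha> | sum \<alpha> (UNIV::3 set) = m. h (\<alpha> 1) (\<alpha> 2) (\<alpha> 3))"
    by (intro sum.cong refl sum_triples_eq_multi_indices) simp
  finally show ?thesis .
qed

lemma monomial_3: "monomial \<alpha> x = x $ 1 ^ \<alpha> 1 * x $ 2 ^ \<alpha> 2 * x $ 3 ^ \<alpha> 3"
  for \<alpha> :: "3 \<Rightarrow> nat"
  unfolding monomial_def UNIV_3 by (simp add: mult.assoc)

lemma poly3_iff_sum_hom_poly: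
  "poly3 n f \<longleftrightarrow> (\<exists>g. (\<forall>m. hom_poly m (g m)) \<and> (\<forall>x. f x = (\<Sum>m\<le>n. g m x)))"
proof
  assume "poly3 n f"
  then obtain c where c: "\<And>x. f x = (\<Sum>a\<le>n. \<Sum>b\<le>n. \<Sum>d\<le>n.
      if a + b + d \<le> n then c a b d * x $ 1 ^ a * x $ 2 ^ b * x $ 3 ^ d else 0)"
    unfolding poly3_def by blast
  define g :: "nat \<Rightarrow> real^3 \<Rightarrow> real"
    where "g m x = (\<Sum>\<alpha> | sum \<alpha> UNIV = m. c (\<alpha> 1) (\<alpha> 2) (\<alpha> 3) * monomial \<alpha> x)" for m x
  have "hom_poly m (g m)" for m
    unfolding g_def
    by (intro hom_poly_sum finite_multi_indices hom_poly.cmult) (use hom_poly_monomial in auto)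
  moreover have "f x = (\<Sum>m\<le>n. g m x)" for x
    unfolding c sum_triples_le_eq_multi_indices g_def by (simp add: monomial_3 mult.assoc)
  ultimately show "\<exists>g. (\<forall>m. hom_poly m (g m)) \<and> (\<forall>x. f x = (\<Sum>m\<le>n. g m x))" by blast
next
  assume "\<exists>g. (\<forall>m. hom_poly m (g m)) \<and> (\<forall>x. f x = (\<Sum>m\<le>n. g m x))"
  then obtain g where g: "\<And>m. hom_poly m (g m)" "\<And>x. f x = (\<Sum>m\<le>n. g m x)" by blast
  obtain c where c: "\<And>m x. g m x = (\<Sum>\<alpha> | sum \<alpha> UNIV = m. c m \<alpha> * monomial \<alpha> x)"
    using choice[of "\<lambda>m c. \<forall>x. g m x = (\<Sum>\<alpha> | sum \<alpha> UNIV = m. c \<alpha> * monomial \<alpha> x)"]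
      hom_poly_monomial_expansion[OF g(1)] by blast
  define C where "C a b d = c (a + b + d) (\<lambda>k::3. if k = 1 then a else if k = 2 then b else d)"
    for a b d
  have index: "(\<lambda>k::3. if k = 1 then \<alpha> 1 else if k = 2 then \<alpha> 2 else \<alpha> 3) = \<alpha>"
    for \<alpha> :: "3 \<Rightarrow> nat"
    using exhaust_3 by (auto simp: fun_eq_iff)
  have "f x = (\<Sum>a\<le>n. \<Sum>b\<le>n. \<Sum>d\<le>n.
      if a + b + d \<le> n then C a b d * x $ 1 ^ a * x $ 2 ^ b * x $ 3 ^ d else 0)" for x
    unfolding sum_triples_le_eq_multi_indices g c
    by (intro sum.cong refl) (simp add: C_def index sum_3 monomial_3 mult.assoc)
  then show "poly3 n f" unfolding poly3_def by blast
qed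

lemma hom_poly_imp_poly3: "hom_poly m f \<Longrightarrow> m \<le> n \<Longrightarrow> poly3 n f"
  unfolding poly3_iff_sum_hom_poly
  by (intro exI[of _ "\<lambda>j x. if j = m then f x else 0"]) (auto intro: hom_poly_if)

lemma poly3_zero: "poly3 n (\<lambda>x. 0)"
  by (rule hom_poly_imp_poly3[OF hom_poly.zero le0])

lemma poly3_add:
  assumes "poly3 n f" "poly3 n g"
  shows "poly3 n (\<lambda>x. f x + g x)"
proof -
  obtain F G where "\<And>m. hom_poly m (F m)" "\<And>x. f x = (\<Sum>m\<le>n. F m x)"
    "\<And>m. hom_poly m (G m)" "\<And>x. g x = (\<Sum>m\<le>n. G m x)"
    using assms unfolding poly3_iff_sum_hom_poly by metis
  then show ?thesis
    unfolding poly3_iff_sum_hom_poly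
    by (intro exI[of _ "\<lambda>m x. F m x + G m x"]) (simp add: hom_poly.add sum.distrib)
qed

lemma poly3_sum:
  "finite A \<Longrightarrow> (\<And>a. a \<in> A \<Longrightarrow> poly3 n (f a)) \<Longrightarrow> poly3 n (\<lambda>x. \<Sum>a\<in>A. f a x)"
  by (induction A rule: finite_induct) (auto intro: poly3_add poly3_zero)

lemma poly3_differentiable: "poly3 n f \<Longrightarrow> f differentiable (at x)"
proof -
  assume "poly3 n f"
  then obtain g where "\<And>m. hom_poly m (g m)" and f: "f = (\<lambda>x. \<Sum>m\<le>n. g m x)"
    unfolding poly3_iff_sum_hom_poly by fastforce
  then have "\<And>m. g m differentiable (at x)" by (blast intro: hom_poly_differentiable)
  then show ?thesis unfolding f by simp
qed

definition hom_field :: "nat \<Rightarrow> (real^'n \<Rightarrow> real^'k) \<Rightarrow> bool" where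
  "hom_field m v \<longleftrightarrow> (\<forall>i. hom_poly m (\<lambda>x. v x $ i))"

lemma hom_field_add: "hom_field m v \<Longrightarrow> hom_field m w \<Longrightarrow> hom_field m (\<lambda>x. v x + w x)"
  by (simp add: hom_field_def hom_poly.add)

lemma hom_field_diff: "hom_field m v \<Longrightarrow> hom_field m w \<Longrightarrow> hom_field m (\<lambda>x. v x - w x)"
  by (simp add: hom_field_def hom_poly_diff)

lemma hom_field_cmult: "hom_field m v \<Longrightarrow> hom_field m (\<lambda>x. c *\<^sub>R v x)"
  by (simp add: hom_field_def hom_poly.cmult)

lemma hom_field_differentiable:
  "hom_field m u \<Longrightarrow> (\<lambda>y. u y $ i) differentiable (at x)"
  unfolding hom_field_def by (blast intro: hom_poly_differentiable)

lemma vpoly3_iff_sum_hom_field: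
  "vpoly3 n q \<longleftrightarrow> (\<exists>Q. (\<forall>m. hom_field m (Q m)) \<and> (\<forall>x. q x = (\<Sum>m\<le>n. Q m x)))"
proof
  assume "vpoly3 n q"
  then have "\<forall>i. \<exists>g. (\<forall>m. hom_poly m (g m)) \<and> (\<forall>x. q x $ i = (\<Sum>m\<le>n. g m x))"
    unfolding vpoly3_def poly3_iff_sum_hom_poly by blast
  then obtain G where G: "\<And>i m. hom_poly m (G i m)" "\<And>i x. q x $ i = (\<Sum>m\<le>n. G i m x)"
    by metis
  show "\<exists>Q. (\<forall>m. hom_field m (Q m)) \<and> (\<forall>x. q x = (\<Sum>m\<le>n. Q m x))"
    by (intro exI[of _ "\<lambda>m x. \<chi> i. G i m x"]) (simp add: hom_field_def G vec_eq_iff)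
next
  assume "\<exists>Q. (\<forall>m. hom_field m (Q m)) \<and> (\<forall>x. q x = (\<Sum>m\<le>n. Q m x))"
  then obtain Q where Q: "\<And>m. hom_field m (Q m)" "\<And>x. q x = (\<Sum>m\<le>n. Q m x)" by blast
  show "vpoly3 n q"
    unfolding vpoly3_def poly3_iff_sum_hom_poly
  proof
    fix i
    show "\<exists>g. (\<forall>m. hom_poly m (g m)) \<and> (\<forall>x. q x $ i = (\<Sum>m\<le>n. g m x))"
      by (rule exI[of _ "\<lambda>m x. Q m x $ i"]) (use Q in \<open>simp add: hom_field_def\<close>)
  qed
qed

lemma vpoly3_add: "vpoly3 n f \<Longrightarrow> vpoly3 n g \<Longrightarrow> vpoly3 n (\<lambda>x. f x + g x)"
  by (simp add: vpoly3_def poly3_add)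

lemma vpoly3_sum_hom_field:
  assumes "finite A" "\<And>a. a \<in> A \<Longrightarrow> hom_field (d a) (Q a)" "\<And>a. a \<in> A \<Longrightarrow> d a \<le> n"
  shows "vpoly3 n (\<lambda>x. \<Sum>a\<in>A. Q a x)"
  unfolding vpoly3_def sum_component
proof
  fix i
  show "poly3 n (\<lambda>x. \<Sum>a\<in>A. Q a x $ i)"
    using assms unfolding hom_field_def by (intro poly3_sum) (blast intro: hom_poly_imp_poly3)+
qed

lemma mpoly3_iff_vpoly3_rows: "mpoly3 n p \<longleftrightarrow> (\<forall>i. vpoly3 n (\<lambda>x. p x $ i))"
  by (simp add: mpoly3_def vpoly3_def)

lemma mpoly3_hom_decomposition:
  assumes "mpoly3 n p"
  obtains P where "\<And>m i. hom_field m (\<lambda>x. P m x $ i)" "\<And>x. p x = (\<Sum>m\<le>n. P m x)"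
proof -
  have "\<forall>i. \<exists>Q. (\<forall>m. hom_field m (Q m)) \<and> (\<forall>x. p x $ i = (\<Sum>m\<le>n. Q m x))"
    using assms unfolding mpoly3_iff_vpoly3_rows vpoly3_iff_sum_hom_field by blast
  then obtain Q where "\<And>i m. hom_field m (Q i m)" "\<And>i x. p x $ i = (\<Sum>m\<le>n. Q i m x)"
    by metis
  then show ?thesis
    by (intro that[of "\<lambda>m x. \<chi> i. Q i m x"]) (simp_all add: vec_eq_iff)
qed

section \<open>Gradient and deviator\<close>

lemma differentiable_vec_componentwise:
  fixes u :: "real^'n \<Rightarrow> real^'k"
  assumes "\<And>i. (\<lambda>y. u y $ i) differentiable (at x)"
  shows "u differentiable (at x)"
  using assms
  by (auto simp: differentiable_componentwise_within[of u x UNIV] Basis_vec_def inner_axis)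

lemma grad_nth:
  assumes "\<And>i. (\<lambda>y. u y $ i) differentiable (at x)"
  shows "grad u x $ i $ j = partial j (\<lambda>y. u y $ i) x"
proof -
  have "(u has_derivative frechet_derivative u (at x)) (at x)"
    using differentiable_vec_componentwise[OF assms] by (rule has_derivative_frechet_derivative)
  then have "((\<lambda>y. u y $ i) has_derivative (\<lambda>h. frechet_derivative u (at x) h $ i)) (at x)"
    by (rule bounded_linear.has_derivative[OF bounded_linear_vec_nth])
  then show ?thesis by (simp add: has_derivative_imp_partial grad_def jacobian_def matrix_def)
qed

lemma grad_on_dom:
  assumes "open \<Omega>" "x \<in> \<Omega>" "u differentiable (at x)"
  shows "grad (on_dom \<Omega> u) x = grad u x"
  unfolding grad_def jacobian_def
  using frechet_derivative_transform_within_open[OF assms(3,1,2), of "on_dom \<Omega> u"]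
  by (simp add: on_dom_def)

lemma grad_hom_field:
  "hom_field m u \<Longrightarrow> grad u x $ i $ j = partial j (\<lambda>y. u y $ i) x"
  by (blast intro: grad_nth hom_field_differentiable)

lemma grad_euler: "hom_field m u \<Longrightarrow> grad u x *v x = real m *\<^sub>R u x"
  using hom_poly_euler[of m "\<lambda>y. u y $ i" x for i]
  by (simp add: vec_eq_iff matrix_vector_mult_def grad_hom_field hom_field_def mult.commute)

lemma trace_grad_hom_field:
  "hom_field m u \<Longrightarrow> trace (grad u x) = (\<Sum>i\<in>UNIV. partial i (\<lambda>y. u y $ i) x)"
  by (simp add: trace_def grad_hom_field)

lemma hom_poly_trace_grad:
  assumes "hom_field m u"
  shows "hom_poly (m - 1) (\<lambda>x. trace (grad u x))"
proof -
  have "hom_poly (m - 1) (\<lambda>x. \<Sum>i\<in>UNIV. partial i (\<lambda>y. u y $ i) x)"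
    using assms by (intro hom_poly_sum hom_poly_partial) (auto simp: hom_field_def)
  then show ?thesis by (simp add: trace_grad_hom_field[OF assms])
qed

lemma grad_sum:
  assumes "finite A" "\<And>a. a \<in> A \<Longrightarrow> hom_field (d a) (u a)"
  shows "grad (\<lambda>x. \<Sum>a\<in>A. u a x) x = (\<Sum>a\<in>A. grad (u a) x)"
proof -
  have "hom_field (d a) (u a) \<Longrightarrow> (\<lambda>y. u a y $ i) differentiable (at x)" for a i
    by (rule hom_field_differentiable)
  with assms show ?thesis
    by (simp add: vec_eq_iff grad_nth grad_hom_field partial_sum)
qed

lemma dev_nth: "dev A $ i $ j = A $ i $ j - (if i = j then trace A / 3 else 0)"
  by (simp add: dev_def mat_def)

lemma trace_dev: "trace (dev A) = 0"
  by (simp add: dev_def trace_def mat_def sum_subtractf sum_3)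

lemma dev_mult_vec: "dev A *v x = A *v x - (trace A / 3) *\<^sub>R x"
  by (simp add: dev_def matrix_vector_mult_diff_rdistrib flip: scaleR_matrix_vector_assoc)

lemma dev_add: "dev (A + B) = dev A + dev B"
  by (simp add: dev_def trace_add add_divide_distrib scaleR_add_left)

lemma dev_sum: "dev (\<Sum>a\<in>A. M a) = (\<Sum>a\<in>A. dev (M a))"
proof (induction A rule: infinite_finite_induct)
  case (insert a A)
  then show ?case by (simp add: dev_add)
qed (simp_all add: dev_def trace_def)

lemma hom_field_dev_rows:
  assumes "\<And>i. hom_field m (\<lambda>x. M x $ i)"
  shows "hom_field m (\<lambda>x. dev (M x) $ i)"
  using assms unfolding hom_field_def dev_nth trace_def
  by (intro allI hom_poly_diff hom_poly_if hom_poly_divide hom_poly_sum) auto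

lemma hom_field_dev_grad:
  assumes "hom_field m u"
  shows "hom_field (m - 1) (\<lambda>x. dev (grad u x) $ i)"
proof -
  have "hom_poly (m - 1)
      (\<lambda>x. partial j (\<lambda>y. u y $ i) x - (if i = j then trace (grad u x) / 3 else 0))" for j
    using assms
    by (intro hom_poly_diff hom_poly_if hom_poly_divide hom_poly_trace_grad hom_poly_partial)
      (auto simp: hom_field_def)
  then show ?thesis
    by (simp add: hom_field_def dev_nth grad_hom_field[OF assms])
qed

lemma hom_field_dev_grad_mult_vec:
  assumes "hom_field m q"
  shows "hom_field m (\<lambda>x. dev (grad q x) *v x)"
proof -
  have "hom_poly m
      (\<lambda>x. real m * q x $ i - (\<Sum>l\<in>UNIV. partial l (\<lambda>y. q y $ l) x * x $ i) / 3)" for i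
    using assms unfolding hom_field_def
    by (intro hom_poly_diff hom_poly.cmult hom_poly_divide hom_poly_sum
        hom_poly_partial_mult_coord) auto
  then show ?thesis
    by (simp add: hom_field_def dev_mult_vec grad_euler[OF assms] trace_grad_hom_field[OF assms]
        sum_distrib_right)
qed

lemma sum_matrix_vector_mult: "(\<Sum>a\<in>A. M a) *v x = (\<Sum>a\<in>A. M a *v x)"
  by (induction A rule: infinite_finite_induct) (simp_all add: matrix_vector_mult_add_rdistrib)

lemma transpose_sum: "transpose (\<Sum>a\<in>A. M a) = (\<Sum>a\<in>A. transpose (M a))"
  by (simp add: vec_eq_iff transpose_def)

lemma hom_field_radial: "hom_poly d s \<Longrightarrow> hom_field (Suc d) (\<lambda>x. s x *\<^sub>R x)"
  by (simp add: hom_field_def hom_poly_mult_coord_right)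

lemma grad_radial_nth:
  assumes "hom_poly d s"
  shows "grad (\<lambda>x. s x *\<^sub>R x) x $ i $ j = (if i = j then s x else 0) + partial j s x * x $ i"
  using grad_hom_field[OF hom_field_radial[OF assms]]
  by (simp add: partial_mult[OF hom_poly_differentiable[OF assms] differentiable_vec_nth]
      partial_vec_nth)

lemma trace_grad_radial:
  assumes "hom_poly d s"
  shows "trace (grad (\<lambda>x. s x *\<^sub>R x) x) = (3 + real d) * s x"
  using hom_poly_euler[OF assms, of x]
  by (simp add: trace_def grad_radial_nth[OF assms] sum.distrib sum_3 algebra_simps)

lemma trace_grad_mult_vec_const:
  assumes "\<And>i. hom_field 0 (\<lambda>x. \<sigma> x $ i)"
  shows "trace (grad (\<lambda>x. \<sigma> x *v x) x) = trace (\<sigma> x)"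
proof -
  have \<sigma>: "\<And>i j. hom_poly 0 (\<lambda>x. \<sigma> x $ i $ j)" using assms by (simp add: hom_field_def)
  have "hom_field 1 (\<lambda>x. \<sigma> x *v x)"
    unfolding hom_field_def matrix_vector_mult_def
    by (simp add: hom_poly_sum hom_poly_mult_coord_right[OF \<sigma>, simplified])
  then have "trace (grad (\<lambda>x. \<sigma> x *v x) x)
      = (\<Sum>i\<in>UNIV. partial i (\<lambda>y. \<Sum>j\<in>UNIV. \<sigma> y $ i $ j * y $ j) x)"
    by (simp add: trace_grad_hom_field matrix_vector_mult_def)
  also have "\<dots> = (\<Sum>i\<in>UNIV. \<Sum>j\<in>UNIV. \<sigma> x $ i $ j * (if j = i then 1 else 0))"
    by (simp add: partial_sum partial_mult hom_poly_differentiable[OF \<sigma>] partial_vec_nth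
        partial_hom_poly_0[OF \<sigma>])
  also have "\<dots> = trace (\<sigma> x)"
    by (simp add: trace_def if_distrib[of "(*) _"] cong: if_cong)
  finally show ?thesis .
qed

lemma trace_grad_scaleR_add:
  assumes "hom_field m v" "hom_field m w"
  shows "trace (grad (\<lambda>x. c *\<^sub>R (v x + w x)) x) = c * (trace (grad v x) + trace (grad w x))"
proof -
  have "hom_field m (\<lambda>x. c *\<^sub>R (v x + w x))"
    using assms by (simp add: hom_field_def hom_poly.add hom_poly.cmult)
  with assms show ?thesis
    by (simp add: trace_grad_hom_field partial_cmult partial_add hom_field_differentiable
        sum.distrib sum_distrib_left distrib_left)
qed

section \<open>The Koszul identity\<close>

definition curl :: "(real^3 \<Rightarrow> real^3) \<Rightarrow> real^3 \<Rightarrow> real^3" where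
  "curl v x = vector [partial 2 (\<lambda>y. v y $ 3) x - partial 3 (\<lambda>y. v y $ 2) x,
                      partial 3 (\<lambda>y. v y $ 1) x - partial 1 (\<lambda>y. v y $ 3) x,
                      partial 1 (\<lambda>y. v y $ 2) x - partial 2 (\<lambda>y. v y $ 1) x]"

lemma hom_poly_curl_mult_coord:
  assumes "hom_field n v"
  shows "hom_poly n (\<lambda>x. curl v x $ i * x $ l)"
  using exhaust_3[of i]
  by (elim disjE; simp only: curl_def vector_3 left_diff_distrib;
      intro hom_poly_diff hom_poly_partial_mult_coord; use assms in \<open>simp add: hom_field_def\<close>)

lemma hom_field_curl:
  assumes "hom_field n v"
  shows "hom_field (n - 1) (curl v)"
  unfolding hom_field_def
proof
  fix i :: 3
  show "hom_poly (n - 1) (\<lambda>x. curl v x $ i)"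
    using exhaust_3[of i]
    by (elim disjE; simp only: curl_def vector_3;
        intro hom_poly_diff hom_poly_partial; use assms in \<open>simp add: hom_field_def\<close>)
qed

lemma cross_curl:
  assumes v: "hom_field n v" and orth: "\<And>x. v x \<bullet> x = 0"
  shows "cross3 (curl v x) x = real (Suc n) *\<^sub>R v x"
proof -
  have v': "\<And>l. (\<lambda>y. v y $ l) differentiable (at x)" using v by (rule hom_field_differentiable)
  have radial: "v x $ j + (\<Sum>l\<in>UNIV. x $ l * partial j (\<lambda>y. v y $ l) x) = 0" for j
  proof -
    have "(\<lambda>y. \<Sum>l\<in>UNIV. v y $ l * y $ l) = (\<lambda>y. 0)"
      using orth by (simp add: inner_vec_def fun_eq_iff)
    then have "0 = partial j (\<lambda>y. \<Sum>l\<in>UNIV. v y $ l * y $ l) x" by simp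
    also have "\<dots> = (\<Sum>l\<in>UNIV. partial j (\<lambda>y. v y $ l * y $ l) x)"
      by (rule partial_sum) (simp_all add: v')
    also have "\<dots> = (\<Sum>l\<in>UNIV.
        (if l = j then v x $ j else 0) + x $ l * partial j (\<lambda>y. v y $ l) x)"
      by (rule sum.cong) (auto simp: partial_mult[OF v' differentiable_vec_nth] partial_vec_nth)
    finally show ?thesis by (simp add: sum.distrib)
  qed
  have euler: "(\<Sum>l\<in>UNIV. x $ l * partial l (\<lambda>y. v y $ i) x) = real n * v x $ i" for i
    using hom_poly_euler v[unfolded hom_field_def] by blast
  show ?thesis
    unfolding vec_eq_iff forall_3
    using radial[of 1] radial[of 2] radial[of 3] euler[of 1] euler[of 2] euler[of 3]
    by (intro conjI; simp add: cross_components curl_def sum_3 algebra_simps; linarith)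
qed

lemma cross3_sum_left: "cross3 (\<Sum>a\<in>A. f a) x = (\<Sum>a\<in>A. cross3 (f a) x)"
  by (induction A rule: infinite_finite_induct) (simp_all add: cross_add_left)

lemma cross_x_sum: "cross_x (\<lambda>x. \<Sum>a\<in>A. \<tau> a x) x = (\<Sum>a\<in>A. cross_x (\<tau> a) x)"
  by (simp add: cross_x_def vec_eq_iff cross3_sum_left)

lemma cross_x_mult_vec: "cross_x \<tau> x *v x = 0"
  using dot_cross_self(3)[of "\<tau> x $ i" x for i]
  by (simp add: vec_eq_iff cross_x_def matrix_vector_mult_def inner_vec_def)

lemma hom_field_cross3: "hom_field m a \<Longrightarrow> hom_field (Suc m) (\<lambda>x. cross3 (a x) x)"
  unfolding hom_field_def forall_3 cross_components
  by (intro conjI hom_poly_diff hom_poly_mult_coord_right hom_poly.mult_coord; blast)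

definition axial :: "real^3^3 \<Rightarrow> real^3" where
  "axial A = vector [A $ 3 $ 2 - A $ 2 $ 3, A $ 1 $ 3 - A $ 3 $ 1, A $ 2 $ 1 - A $ 1 $ 2]"

lemma trace_cross_rows: "trace (\<chi> i. cross3 (A $ i) x) = - (axial A \<bullet> x)"
  by (simp add: trace_def sum_3 cross_components axial_def inner_vec_def algebra_simps)

lemma axial_symmetric:
  assumes "transpose A = A"
  shows "axial A = 0"
proof -
  have "A $ j $ i = A $ i $ j" for i j
    using arg_cong[OF assms, of "\<lambda>M. M $ i $ j"] by (simp add: transpose_def)
  then show ?thesis
    unfolding axial_def vec_eq_iff forall_3 by (metis diff_self vector_3 zero_index)
qed

lemma trace_cross_x_symmetric: "transpose A = A \<Longrightarrow> trace (\<chi> i. cross3 (A $ i) x) = 0"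
  by (simp add: trace_cross_rows axial_symmetric)

lemma cross_rows_add_outer:
  "(\<chi> i. cross3 ((A + (\<chi> i j. a $ i * x $ j)) $ i) x) = (\<chi> i. cross3 (A $ i) x)"
proof -
  have "(\<chi> i j. a $ i * x $ j) $ i = a $ i *\<^sub>R x" for i by (simp add: vec_eq_iff)
  then show ?thesis by (simp add: cross_add_left cross_mult_left)
qed

lemma symmetric_add_outer:
  assumes "cross3 a x = axial A"
  shows "transpose (A + (\<chi> i j. a $ i * x $ j)) = A + (\<chi> i j. a $ i * x $ j)"
  using assms unfolding vec_eq_iff forall_3
  by (simp add: transpose_def axial_def cross_components algebra_simps)

lemma hom_field_axial:
  assumes "\<And>i. hom_field n (\<lambda>x. W x $ i)"
  shows "hom_field n (\<lambda>x. axial (W x))"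
  unfolding hom_field_def
proof
  fix i :: 3
  show "hom_poly n (\<lambda>x. axial (W x) $ i)"
    using exhaust_3[of i] assms
    by (elim disjE; simp only: axial_def vector_3; intro hom_poly_diff; simp add: hom_field_def)
qed

section \<open>Decomposition of homogeneous trace-free fields\<close>

lemma dev_grad_matching_radial:
  assumes hom: "\<And>i. hom_field m (\<lambda>x. \<sigma> x $ i)" and tracefree: "\<And>x. trace (\<sigma> x) = 0"
  shows "\<exists>u. hom_field (Suc m) u \<and> (\<forall>x. dev (grad u x) *v x = \<sigma> x *v x)"
proof (intro exI conjI allI)
  define v where "v x = \<sigma> x *v x" for x
  have hv: "hom_field (Suc m) v"
    using hom unfolding hom_field_def v_def matrix_vector_mult_def
    by (simp add: hom_poly_sum hom_poly_mult_coord_right)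
  \<comment> \<open>For \<open>m = 0\<close> division by zero makes \<open>s = 0\<close>; harmless, as then \<open>div v = trace \<sigma> = 0\<close>.\<close>
  define s where "s x = trace (grad v x) / (2 * real m)" for x
  have hs: "hom_poly m s"
    unfolding s_def using hom_poly_trace_grad[OF hv] by (simp add: hom_poly_divide)
  define u where "u x = inverse (real (Suc m)) *\<^sub>R (v x + s x *\<^sub>R x)" for x
  show hu: "hom_field (Suc m) u"
    unfolding u_def by (intro hom_field_cmult hom_field_add hv hom_field_radial hs)
  have "trace (grad u x) = 3 * s x" for x
  proof -
    have "trace (grad u x) = inverse (real (Suc m)) * (trace (grad v x) + (3 + real m) * s x)"
      unfolding u_def trace_grad_scaleR_add[OF hv hom_field_radial[OF hs]]
        trace_grad_radial[OF hs] ..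
    also have "\<dots> = 3 * s x"
    proof (cases "m = 0")
      case True
      then have "trace (grad v x) = 0"
        using trace_grad_mult_vec_const[of \<sigma> x] hom tracefree by (simp add: v_def[abs_def])
      then show ?thesis using True by (simp add: s_def)
    next
      case False
      then have "trace (grad v x) = 2 * real m * s x" by (simp add: s_def)
      then show ?thesis by (simp add: field_simps)
    qed
    finally show ?thesis .
  qed
  moreover have "grad u x *v x = v x + s x *\<^sub>R x" for x
    using grad_euler[OF hu, of x] by (simp add: u_def)
  ultimately show "dev (grad u x) *v x = \<sigma> x *v x" for x
    by (simp add: dev_mult_vec v_def)
qed

lemma radially_null_eq_cross_x:
  assumes hom: "\<And>i. hom_field m (\<lambda>x. \<rho> x $ i)" and radial: "\<And>x. \<rho> x *v x = 0"
  shows "\<exists>W. (\<forall>i. hom_field (m - 1) (\<lambda>x. W x $ i)) \<and> (\<forall>x. \<rho> x = cross_x W x)"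
proof (intro exI conjI allI)
  define W where "W x = (\<chi> i. inverse (real (Suc m)) *\<^sub>R curl (\<lambda>y. \<rho> y $ i) x)" for x
  show "hom_field (m - 1) (\<lambda>x. W x $ i)" for i
    unfolding W_def vec_lambda_beta by (intro hom_field_cmult hom_field_curl hom)
  have "\<rho> x $ i \<bullet> x = 0" for x i
    using radial[of x] by (simp add: vec_eq_iff matrix_vector_mult_def inner_vec_def)
  then show "\<rho> x = cross_x W x" for x
    by (simp add: vec_eq_iff cross_x_def W_def cross_mult_left cross_curl[OF hom])
qed

lemma symmetric_cross_x_representative:
  assumes hom: "\<And>i. hom_field n (\<lambda>x. W x $ i)" and tracefree: "\<And>x. trace (cross_x W x) = 0"
  shows "\<exists>\<tau>. (\<forall>i. hom_field n (\<lambda>x. \<tau> x $ i)) \<and> (\<forall>x. transpose (\<tau> x) = \<tau> x)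
           \<and> cross_x \<tau> = cross_x W"
proof (intro exI conjI allI)
  define k where "k x = axial (W x)" for x
  have hk: "hom_field n k" unfolding k_def by (rule hom_field_axial[OF hom])
  have "k x \<bullet> x = 0" for x
    using tracefree[of x] by (simp add: k_def cross_x_def trace_cross_rows)
  then have ak: "cross3 (inverse (real (Suc n)) *\<^sub>R curl k x) x = k x" for x
    by (simp add: cross_mult_left cross_curl[OF hk])
  \<comment> \<open>The rows of \<open>a x\<^sup>T\<close> are parallel to \<open>x\<close>; \<open>a \<times> x = k\<close> makes its skew part cancel that of \<open>W\<close>.\<close>
  define \<tau> where "\<tau> x = W x + (\<chi> i j. (inverse (real (Suc n)) *\<^sub>R curl k x) $ i * x $ j)" for x
  show "hom_field n (\<lambda>x. \<tau> x $ i)" for i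
    using hom[of i] hom_poly_curl_mult_coord[OF hk]
    by (simp add: \<tau>_def hom_field_def mult.assoc hom_poly.add hom_poly.cmult)
  show "transpose (\<tau> x) = \<tau> x" for x
    unfolding \<tau>_def by (rule symmetric_add_outer) (use ak[of x] in \<open>simp only: k_def\<close>)
  show "cross_x \<tau> = cross_x W"
    unfolding fun_eq_iff cross_x_def \<tau>_def by (intro allI cross_rows_add_outer)
qed

lemma tracefree_hom_decomposition:
  assumes hom: "\<And>i. hom_field m (\<lambda>x. \<sigma> x $ i)" and tracefree: "\<And>x. trace (\<sigma> x) = 0"
  shows "\<exists>\<tau> u. (\<forall>i. hom_field (m - 1) (\<lambda>x. \<tau> x $ i)) \<and> (\<forall>x. transpose (\<tau> x) = \<tau> x)
           \<and> hom_field (Suc m) u \<and> (\<forall>x. \<sigma> x = cross_x \<tau> x + dev (grad u x))"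
proof -
  obtain u where hu: "hom_field (Suc m) u" and radial: "\<And>x. dev (grad u x) *v x = \<sigma> x *v x"
    using dev_grad_matching_radial[OF hom tracefree] by blast
  define \<rho> where "\<rho> x = \<sigma> x - dev (grad u x)" for x
  have "hom_field m (\<lambda>x. \<rho> x $ i)" for i
    using hom_field_diff[OF hom hom_field_dev_grad[OF hu, simplified]] by (simp add: \<rho>_def)
  moreover have "\<rho> x *v x = 0" for x
    by (simp add: \<rho>_def radial matrix_vector_mult_diff_rdistrib)
  ultimately obtain W where hW: "\<And>i. hom_field (m - 1) (\<lambda>x. W x $ i)"
    and \<rho>W: "\<And>x. \<rho> x = cross_x W x"
    using radially_null_eq_cross_x by metis
  have "trace (cross_x W x) = 0" for x
    by (simp flip: \<rho>W add: \<rho>_def trace_sub trace_dev tracefree)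
  then obtain \<tau> where "\<And>i. hom_field (m - 1) (\<lambda>x. \<tau> x $ i)" "\<And>x. transpose (\<tau> x) = \<tau> x"
    and "cross_x \<tau> = cross_x W"
    using symmetric_cross_x_representative[OF hW] by metis
  moreover have "\<sigma> x = cross_x W x + dev (grad u x)" for x
    using \<rho>W[of x] by (simp add: \<rho>_def diff_eq_eq)
  ultimately show ?thesis using hu by metis
qed

lemma dev_grad_eq_0_of_radial:
  assumes hq: "hom_field m q" and radial: "\<And>x. dev (grad q x) *v x = 0"
  shows "dev (grad q x) = 0"
proof (cases "m = 0")
  case True
  then have "grad q x = 0"
    using hq by (simp add: vec_eq_iff grad_hom_field hom_field_def partial_hom_poly_0)
  then show ?thesis by (simp add: dev_def trace_def)
next
  case False
  define s where "s x = trace (grad q x) / (3 * real m)" for x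
  have hs: "hom_poly (m - 1) s"
    unfolding s_def by (rule hom_poly_divide[OF hom_poly_trace_grad[OF hq]])
  have q: "q = (\<lambda>x. s x *\<^sub>R x)"
  proof
    fix x
    have "real m *\<^sub>R q x = (trace (grad q x) / 3) *\<^sub>R x"
      using radial[of x] by (simp add: dev_mult_vec grad_euler[OF hq])
    then show "q x = s x *\<^sub>R x" using False by (simp add: s_def vec_eq_iff field_simps)
  qed
  have "trace (grad q x) = (3 + real (m - 1)) * s x" for x
    unfolding q by (rule trace_grad_radial[OF hs])
  moreover have "trace (grad q x) = 3 * real m * s x" for x
    using False by (simp add: s_def)
  ultimately have "(3 + real (m - 1)) * s x = 3 * real m * s x" for x
    by metis
  then have "m = 1 \<or> s = (\<lambda>x. 0)"
    using False by (auto simp: fun_eq_iff of_nat_diff algebra_simps)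
  then have "partial j s x = 0" for j
    using hs partial_hom_poly_0 by fastforce
  then have "grad q x = s x *\<^sub>R mat 1"
    by (simp add: q vec_eq_iff grad_radial_nth[OF hs] mat_def)
  then show ?thesis by (simp add: dev_def trace_def mat_def sum_3)
qed

lemma mpoly3_cross_x_plus_dev_grad:
  assumes "mpoly3 k \<tau>" "vpoly3 (k + 2) u"
  shows "mpoly3 (k + 1) (\<lambda>x. cross_x \<tau> x + dev (grad u x))"
proof -
  obtain T where hT: "\<And>m i. hom_field m (\<lambda>x. T m x $ i)"
    and \<tau>: "\<And>x. \<tau> x = (\<Sum>m\<le>k. T m x)"
    using mpoly3_hom_decomposition[OF assms(1)] by blast
  obtain U where hU: "\<And>m. hom_field m (U m)" and u: "\<And>x. u x = (\<Sum>m\<le>k + 2. U m x)"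
    using assms(2) unfolding vpoly3_iff_sum_hom_field by blast
  have "cross_x \<tau> x + dev (grad u x)
      = (\<Sum>m\<le>k. cross_x (T m) x) + (\<Sum>m\<le>k + 2. dev (grad (U m) x))" for x
    unfolding \<tau>[abs_def] u[abs_def] cross_x_sum dev_sum
    by (simp add: grad_sum[where d = "\<lambda>m. m"] hU dev_sum del: sum.atMost_Suc)
  moreover have "vpoly3 (k + 1)
      (\<lambda>x. (\<Sum>m\<le>k. cross_x (T m) x) $ i + (\<Sum>m\<le>k + 2. dev (grad (U m) x)) $ i)" for i
    unfolding sum_component
  proof (rule vpoly3_add)
    show "vpoly3 (k + 1) (\<lambda>x. \<Sum>m\<le>k. cross_x (T m) x $ i)"
      by (rule vpoly3_sum_hom_field[where d = Suc])
        (simp_all add: cross_x_def hom_field_cross3 hT)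
    show "vpoly3 (k + 1) (\<lambda>x. \<Sum>m\<le>k + 2. dev (grad (U m) x) $ i)"
      using hom_field_dev_grad[OF hU] by (intro vpoly3_sum_hom_field[where d = "\<lambda>m. m - 1"]) auto
  qed
  ultimately show ?thesis
    unfolding mpoly3_iff_vpoly3_rows by simp
qed

lemma dev_mpoly3_decomposition:
  assumes "mpoly3 (k + 1) p"
  shows "\<exists>\<tau> u. mpoly3 k \<tau> \<and> (\<forall>x. transpose (\<tau> x) = \<tau> x) \<and> vpoly3 (k + 2) u
           \<and> (\<forall>x. dev (p x) = cross_x \<tau> x + dev (grad u x))"
proof -
  obtain P where hP: "\<And>m i. hom_field m (\<lambda>x. P m x $ i)"
    and p: "\<And>x. p x = (\<Sum>m\<le>k + 1. P m x)"
    using mpoly3_hom_decomposition[OF assms] by blast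
  have "\<forall>m. \<exists>\<tau> u. (\<forall>i. hom_field (m - 1) (\<lambda>x. \<tau> x $ i)) \<and> (\<forall>x. transpose (\<tau> x) = \<tau> x)
      \<and> hom_field (Suc m) u \<and> (\<forall>x. dev (P m x) = cross_x \<tau> x + dev (grad u x))"
    by (intro allI tracefree_hom_decomposition hom_field_dev_rows hP trace_dev)
  then obtain T U where hT: "\<And>m i. hom_field (m - 1) (\<lambda>x. T m x $ i)"
    and sym: "\<And>m x. transpose (T m x) = T m x" and hU: "\<And>m. hom_field (Suc m) (U m)"
    and TU: "\<And>m x. dev (P m x) = cross_x (T m) x + dev (grad (U m) x)"
    by metis
  define \<tau> where "\<tau> x = (\<Sum>m\<le>k + 1. T m x)" for x
  define u where "u x = (\<Sum>m\<le>k + 1. U m x)" for x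
  have "mpoly3 k \<tau>"
    unfolding mpoly3_iff_vpoly3_rows \<tau>_def sum_component
    using hT by (intro allI vpoly3_sum_hom_field[where d = "\<lambda>m. m - 1"]) auto
  moreover have "transpose (\<tau> x) = \<tau> x" for x
    by (simp add: \<tau>_def transpose_sum sym del: sum.atMost_Suc)
  moreover have "vpoly3 (k + 2) u"
    unfolding u_def using hU by (intro vpoly3_sum_hom_field[where d = Suc]) auto
  moreover have "dev (p x) = cross_x \<tau> x + dev (grad u x)" for x
    unfolding p dev_sum TU \<tau>_def[abs_def] u_def[abs_def] cross_x_sum
    by (simp add: sum.distrib grad_sum[where d = Suc] hU dev_sum del: sum.atMost_Suc)
  ultimately show ?thesis by blast
qed

lemma dev_grad_eq_0_of_radial_near_0:
  assumes "vpoly3 n q" "r > 0" and radial: "\<And>x. norm x < r \<Longrightarrow> dev (grad q x) *v x = 0"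
  shows "dev (grad q x) = 0"
proof -
  obtain Q where hQ: "\<And>m. hom_field m (Q m)" and q: "\<And>x. q x = (\<Sum>m\<le>n. Q m x)"
    using assms(1) unfolding vpoly3_iff_sum_hom_field by blast
  have dev_grad_q: "dev (grad q x) = (\<Sum>m\<le>n. dev (grad (Q m) x))" for x
    unfolding q[abs_def] by (simp add: grad_sum[where d = "\<lambda>m. m"] hQ dev_sum)
  have "dev (grad (Q m) y) *v y = 0" if "m \<le> n" for m y
  proof -
    have "(dev (grad (Q m) y) *v y) $ i = 0" for i
    proof (rule hom_poly_components_eq_0[where w = "\<lambda>m y. (dev (grad (Q m) y) *v y) $ i"])
      show "hom_poly m (\<lambda>y. (dev (grad (Q m) y) *v y) $ i)" for m
        using hom_field_dev_grad_mult_vec[OF hQ] by (simp add: hom_field_def)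
      show "(\<Sum>m\<le>n. (dev (grad (Q m) y) *v y) $ i) = 0" if "norm y < r" for y
        using radial[OF that] by (simp add: dev_grad_q sum_matrix_vector_mult flip: sum_component)
    qed (use assms(2) that in auto)
    then show ?thesis by (simp add: vec_eq_iff)
  qed
  then show ?thesis
    by (simp add: dev_grad_q dev_grad_eq_0_of_radial[OF hQ])
qed

lemma cross_x_on_dom: "cross_x (on_dom \<Omega> \<tau>) = on_dom \<Omega> (cross_x \<tau>)"
  by (simp add: fun_eq_iff cross_x_def on_dom_def vec_eq_iff)

lemma dev_grad_on_on_dom:
  assumes "open \<Omega>" "vpoly3 n u"
  shows "dev_grad_on \<Omega> (on_dom \<Omega> u) = on_dom \<Omega> (\<lambda>x. dev (grad u x))"
proof -
  have "u differentiable (at x)" for x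
    using assms(2)
    by (auto simp: vpoly3_def intro: differentiable_vec_componentwise poly3_differentiable)
  then show ?thesis
    using grad_on_dom[OF assms(1)] by (simp add: fun_eq_iff dev_grad_on_def on_dom_def)
qed

lemma on_dom_add:
  fixes f g :: "real^3 \<Rightarrow> 'a::monoid_add"
  shows "(\<lambda>x. on_dom \<Omega> f x + on_dom \<Omega> g x) = on_dom \<Omega> (\<lambda>x. f x + g x)"
  by (simp add: fun_eq_iff on_dom_def)

lemma cross_x_plus_dev_grad_in_PM:
  assumes "open \<Omega>" and "a \<in> cross_x ` PM \<Omega> k symm_mats"
    and "b \<in> dev_grad_on \<Omega> ` PV \<Omega> (k + 2)"
  shows "(\<lambda>x. a x + b x) \<in> PM \<Omega> (k + 1) tracefree_mats"
proof -
  obtain \<tau> where a: "a = on_dom \<Omega> (cross_x \<tau>)" and "mpoly3 k \<tau>"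
    and sym: "\<And>x. x \<in> \<Omega> \<Longrightarrow> transpose (\<tau> x) = \<tau> x"
    using assms(2) by (auto simp: PM_def symm_mats_def cross_x_on_dom)
  obtain u where b: "b = on_dom \<Omega> (\<lambda>x. dev (grad u x))" and "vpoly3 (k + 2) u"
    using assms(3) by (auto simp: PV_def dev_grad_on_on_dom[OF assms(1)])
  have "mpoly3 (k + 1) (\<lambda>x. cross_x \<tau> x + dev (grad u x))"
    by (rule mpoly3_cross_x_plus_dev_grad) fact+
  moreover have "trace (cross_x \<tau> x + dev (grad u x)) = 0" if "x \<in> \<Omega>" for x
    by (simp add: trace_add trace_dev cross_x_def trace_cross_x_symmetric sym[OF that])
  ultimately show ?thesis
    unfolding a b on_dom_add PM_def tracefree_mats_def by blast
qed

lemma PM_tracefree_decomposition: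
  assumes "open \<Omega>" and "f \<in> PM \<Omega> (k + 1) tracefree_mats"
  shows "\<exists>a \<in> cross_x ` PM \<Omega> k symm_mats. \<exists>b \<in> dev_grad_on \<Omega> ` PV \<Omega> (k + 2).
           f = (\<lambda>x. a x + b x)"
proof -
  obtain p where f: "f = on_dom \<Omega> p" and "mpoly3 (k + 1) p"
    and tracefree: "\<And>x. x \<in> \<Omega> \<Longrightarrow> trace (p x) = 0"
    using assms(2) by (auto simp: PM_def tracefree_mats_def)
  then obtain \<tau> u where "mpoly3 k \<tau>" "\<And>x. transpose (\<tau> x) = \<tau> x" "vpoly3 (k + 2) u"
    and pe: "\<And>x. dev (p x) = cross_x \<tau> x + dev (grad u x)"
    using dev_mpoly3_decomposition by metis
  then have "on_dom \<Omega> \<tau> \<in> PM \<Omega> k symm_mats" "on_dom \<Omega> u \<in> PV \<Omega> (k + 2)"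
    by (auto simp: PM_def PV_def symm_mats_def)
  moreover have "f x = cross_x (on_dom \<Omega> \<tau>) x + dev_grad_on \<Omega> (on_dom \<Omega> u) x" for x
  proof -
    have "p x = cross_x \<tau> x + dev (grad u x)" if "x \<in> \<Omega>"
      using tracefree[OF that] pe[of x] by (simp add: dev_def)
    then show ?thesis
      unfolding f cross_x_on_dom dev_grad_on_on_dom[OF assms(1) \<open>vpoly3 (k + 2) u\<close>]
      by (simp add: on_dom_def)
  qed
  ultimately show ?thesis by fast
qed

lemma cross_x_PM_inter_dev_grad_PV:
  assumes "open \<Omega>" "0 \<in> \<Omega>"
    and "f \<in> cross_x ` PM \<Omega> k symm_mats" and "f \<in> dev_grad_on \<Omega> ` PV \<Omega> n"
  shows "f = (\<lambda>x. 0)"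
proof -
  obtain \<tau> where f\<tau>: "f = on_dom \<Omega> (cross_x \<tau>)"
    using assms(3) by (auto simp: PM_def cross_x_on_dom)
  obtain q where fq: "f = on_dom \<Omega> (\<lambda>x. dev (grad q x))" and "vpoly3 n q"
    using assms(4) by (auto simp: PV_def dev_grad_on_on_dom[OF assms(1)])
  obtain r where "r > 0" and ball: "ball 0 r \<subseteq> \<Omega>"
    using assms(1,2) open_contains_ball by blast
  have "dev (grad q x) *v x = 0" if "norm x < r" for x
  proof -
    have "x \<in> \<Omega>" using ball that by auto
    then have "dev (grad q x) = cross_x \<tau> x"
      using fun_cong[OF trans[OF fq[symmetric] f\<tau>], of x] by (simp add: on_dom_def)
    then show ?thesis by (simp add: cross_x_mult_vec)
  qed
  then have "dev (grad q x) = 0" for x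
    by (rule dev_grad_eq_0_of_radial_near_0[OF \<open>vpoly3 n q\<close> \<open>r > 0\<close>])
  then show ?thesis by (simp add: fq on_dom_def)
qed

lemma zero_in_cross_x_PM: "(\<lambda>x. 0) \<in> cross_x ` PM \<Omega> k symm_mats"
proof
  show "on_dom \<Omega> (\<lambda>x. 0) \<in> PM \<Omega> k symm_mats"
    unfolding PM_def mpoly3_def symm_mats_def
    by (intro CollectI exI[of _ "\<lambda>x. 0"]) (simp add: poly3_zero transpose_def vec_eq_iff)
qed (simp add: cross_x_on_dom fun_eq_iff on_dom_def cross_x_def vec_eq_iff)

lemma zero_in_dev_grad_on_PV:
  assumes "open \<Omega>"
  shows "(\<lambda>x. 0) \<in> dev_grad_on \<Omega> ` PV \<Omega> n"
proof
  have "vpoly3 n (\<lambda>x. 0)"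
    by (simp add: vpoly3_def poly3_zero)
  then show "on_dom \<Omega> (\<lambda>x. 0) \<in> PV \<Omega> n" by (auto simp: PV_def)
  have "grad (\<lambda>x. 0) x = 0" for x
    by (simp add: grad_def jacobian_def matrix_def vec_eq_iff)
  then show "(\<lambda>x. 0) = dev_grad_on \<Omega> (on_dom \<Omega> (\<lambda>x. 0))"
    unfolding dev_grad_on_on_dom[OF assms \<open>vpoly3 n (\<lambda>x. 0)\<close>]
    by (simp add: on_dom_def fun_eq_iff dev_def trace_def)
qed

theorem lemma3p4:
  fixes \<Omega> :: "(real^3) set" and k :: nat
  assumes "open \<Omega>" and "connected \<Omega>" and "bounded \<Omega>" and "0 \<in> \<Omega>"
  shows "is_direct_sum (PM \<Omega> (k+1) tracefree_mats)
           (cross_x ` PM \<Omega> k symm_mats)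
           (dev_grad_on \<Omega> ` PV \<Omega> (k+2))"
  unfolding is_direct_sum_def
proof
  show "PM \<Omega> (k + 1) tracefree_mats = {(\<lambda>x. a x + b x) |a b.
      a \<in> cross_x ` PM \<Omega> k symm_mats \<and> b \<in> dev_grad_on \<Omega> ` PV \<Omega> (k + 2)}"
    using PM_tracefree_decomposition[OF assms(1)] cross_x_plus_dev_grad_in_PM[OF assms(1)]
    by blast
  show "cross_x ` PM \<Omega> k symm_mats \<inter> dev_grad_on \<Omega> ` PV \<Omega> (k + 2) = {\<lambda>x. 0}"
    using cross_x_PM_inter_dev_grad_PV[OF assms(1,4)] zero_in_cross_x_PM
      zero_in_dev_grad_on_PV[OF assms(1)]
    by blast
qed

end
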